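(* Let $D$ be a division semialgebra over $\mathbb{Z}_\mathrm{max}$ with finite unit index, and let $G=D^\times/\mathbb{Z}_\mathrm{max}^\times$. Then for each positive integer $n$, $G$ has at most one cyclic subgroup of order $n$.
   Context: A (possibly noncommutative) semiring has a commutative associative addition with identity $0$ and an associative multiplication with identity $1$, satisfying both distributive laws; a division semiring is one in which every nonzero element is invertible. $\mathbb{Z}_\mathrm{max}=\mathbb{Z}\cup\{-\infty\}$ is the semifield with addition $\max$ and multiplication ordinary addition. A division semialgebra over a semifield $K$ is a division semiring $D$ with an injective homomorphism from $K$ into the center of $D$ (so $K^\times$ is a central subgroup of $D^\times$). The unit index is $\mathrm{ui}(D/K)=|D^\times/K^\times|$. *)

theory Defs
  imports "HOL-Algebra.Algebra"
begin

text \<open>Z_max = Z \<union> {-\<infinity>}, encoded as int option, None standing for -\<infinity>.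
 Addition is max, multiplication is ordinary addition.\<close>

type_synonym zmax = "int option"

fun zmax_add :: "zmax \<Rightarrow> zmax \<Rightarrow> zmax" where
  "zmax_add None y = y"
| "zmax_add x None = x"
| "zmax_add (Some a) (Some b) = Some (max a b)"

fun zmax_mul :: "zmax \<Rightarrow> zmax \<Rightarrow> zmax" where
  "zmax_mul (Some a) (Some b) = Some (a + b)"
| "zmax_mul _ _ = None"

definition zmax_zero :: zmax where "zmax_zero = None"
definition zmax_one :: zmax where "zmax_one = Some 0"

text \<open>The semiring is the whole type 'a with its operations +, *, 0, 1.\<close>

definition is_semiring :: "('a::{plus,times,zero,one}) itself \<Rightarrow> bool" where
  "is_semiring _ \<longleftrightarrow>
     (\<forall>a b c::'a. (a + b) + c = a + (b + c)) \<and>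
     (\<forall>a b::'a. a + b = b + a) \<and>
     (\<forall>a::'a. 0 + a = a) \<and>
     (\<forall>a b c::'a. (a * b) * c = a * (b * c)) \<and>
     (\<forall>a::'a. 1 * a = a \<and> a * 1 = a) \<and>
     (\<forall>a b c::'a. a * (b + c) = a * b + a * c) \<and>
     (\<forall>a b c::'a. (a + b) * c = a * c + b * c)"

definition sr_units :: "('a::{times,one}) set" where
  "sr_units = {x. \<exists>y. x * y = 1 \<and> y * x = 1}"

definition is_division_semiring :: "('a::{plus,times,zero,one}) itself \<Rightarrow> bool" where
  "is_division_semiring T \<longleftrightarrow> is_semiring T \<and> (\<forall>x::'a. x \<noteq> 0 \<longrightarrow> x \<in> sr_units)"

definition is_division_semialgebra_zmax :: "(zmax \<Rightarrow> 'a::{plus,times,zero,one}) \<Rightarrow> bool" where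
  "is_division_semialgebra_zmax phi \<longleftrightarrow>
     is_division_semiring TYPE('a) \<and>
     (\<forall>x y. phi (zmax_add x y) = phi x + phi y) \<and>
     (\<forall>x y. phi (zmax_mul x y) = phi x * phi y) \<and>
     phi zmax_zero = 0 \<and> phi zmax_one = 1 \<and>
     inj phi \<and>
     (\<forall>k (d::'a). phi k * d = d * phi k)"

definition units_group :: "('a::{times,one}) monoid" where
  "units_group = \<lparr>carrier = sr_units, monoid.mult = (*), monoid.one = 1\<rparr>"

text \<open>Image of Z_max^x = Z (the elements Some k).\<close>
definition scalar_units :: "(zmax \<Rightarrow> 'a) \<Rightarrow> 'a set" where
  "scalar_units phi = phi ` range Some"

definition unit_quotient :: "(zmax \<Rightarrow> ('a::{times,one})) \<Rightarrow> 'a set monoid" where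
  "unit_quotient phi = units_group Mod scalar_units phi"

end

theory Submission
  imports Defs
begin

(* Identify Z_max^x = Z with its image N in D^x, a central subgroup. D is idempotent (1 + 1 = 1),
   so x <= y iff x + y = y is a partial order compatible with multiplication. As G = D^x / N is
   finite, some power u^M of each unit u lies in N = Z and is therefore comparable with 1;
   expanding (1 + u)^M shows that u itself is then comparable with 1. Hence the order is total on
   D^x, and n-th roots in D^x are unique. Now if N x has order n in G, then x^n = a in Z with
   gcd(a, n) = 1, since otherwise uniqueness of roots would put a smaller power of x into N.
   Given a second coset N y of order n, with y^n = b, write b = r a + n q; then (x^r q)^n = y^n,
   so y = x^r q and N y is a power of N x. *)

section \<open>Groups with unique roots and a central copy of the integers\<close>

locale unique_roots_group = group +
  assumes pow_eq_pow_imp_eq: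
    "\<lbrakk>x \<in> carrier G; y \<in> carrier G; 0 < n; x [^] (n::nat) = y [^] n\<rbrakk> \<Longrightarrow> x = y"

locale central_int_subgroup = group +
  fixes f :: "int \<Rightarrow> 'a"
  assumes f_hom: "f \<in> hom integer_group G"
    and f_central: "x \<in> carrier G \<Longrightarrow> f k \<otimes> x = x \<otimes> f k"
begin

lemma f_closed: "f k \<in> carrier G"
  using f_hom by (auto simp: hom_def)

lemma f_add: "f (a + b) = f a \<otimes> f b"
  using f_hom by (auto simp: hom_def)

lemma f_int_pow: "f a [^] (k::int) = f (k * a)"
  using group_hom.hom_int_pow[of integer_group G f a k] f_hom
  by (simp add: group_hom_def group_hom_axioms_def is_group)

lemma f_pow: "f a [^] (n::nat) = f (int n * a)"
  using f_int_pow[of a "int n"] by (simp add: int_pow_int)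

lemma normal_range: "range f \<lhd> G"
proof -
  have "subgroup (range f) G"
    using group_hom.img_is_subgroup[of integer_group G f] f_hom
    by (simp add: group_hom_def group_hom_axioms_def is_group)
  moreover have "x \<otimes> f k \<otimes> inv x = f k" if "x \<in> carrier G" for x k
    using that by (metis f_central f_closed inv_closed m_assoc r_inv r_one)
  ultimately show ?thesis
    unfolding normal_inv_iff by auto
qed

end

sublocale central_int_subgroup \<subseteq> N: normal "range f" G
  by (rule normal_range)

sublocale central_int_subgroup \<subseteq> Q: group "G Mod range f"
  by (rule N.factorgroup_is_group)

context central_int_subgroup
begin

lemma coset_eq_range_iff: "x \<in> carrier G \<Longrightarrow> range f #> x = range f \<longleftrightarrow> x \<in> range f"
  using rcos_self coset_join2 N.subgroup_axioms by metis

lemma coset_mult_f: "x \<in> carrier G \<Longrightarrow> range f #> (x \<otimes> f k) = range f #> x"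
  using repr_independence[of "x \<otimes> f k" "range f" x] rcosI[of "f k" "range f" x] f_central
    f_closed N.subgroup_axioms N.subset by auto

lemma coset_pow_ord_in_range:
  assumes "x \<in> carrier G"
  obtains a where "x [^] Q.ord (range f #> x) = f a"
proof -
  have "range f #> x \<in> carrier (G Mod range f)"
    using assms by (simp add: carrier_FactGroup rcosetsI N.subset)
  then have "(range f #> x) [^]\<^bsub>G Mod range f\<^esub> Q.ord (range f #> x) = range f"
    using Q.pow_ord_eq_1 by (simp add: one_FactGroup)
  then have "range f #> (x [^] Q.ord (range f #> x)) = range f"
    using N.FactGroup_pow[OF assms] by simp
  then show thesis
    using that coset_eq_range_iff assms by blast
qed

end

locale central_int_quotient = central_int_subgroup G f + unique_roots_group G for G (structure) and f
begin

lemma coset_ord_root_coprime: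
  assumes x: "x \<in> carrier G" and n: "Q.ord (range f #> x) = n" "0 < n"
    and a: "x [^] n = f a"
  shows "coprime a (int n)"
proof -
  define k where "k = nat (gcd a (int n))"
  have k_gcd: "int k = gcd a (int n)"
    using n by (simp add: k_def)
  then have "int k dvd int n"
    by simp
  then obtain m where nm: "n = k * m"
    by (auto simp only: of_nat_dvd_iff elim: dvdE)
  have "int k dvd a"
    using k_gcd by simp
  then obtain a' where a': "a = int k * a'"
    by (elim dvdE)
  have "0 < m"
    using n nm by simp
  have "(x [^] m) [^] k = x [^] n"
    using x nm by (simp add: nat_pow_pow mult.commute)
  also have "\<dots> = f a' [^] k"
    using a a' by (simp add: f_pow)
  finally have "(x [^] m) [^] k = f a' [^] k" .
  then have "x [^] m = f a'"
    using pow_eq_pow_imp_eq[of "x [^] m" "f a'" k] n nm x f_closed by simp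
  then have "(range f #> x) [^]\<^bsub>G Mod range f\<^esub> m = \<one>\<^bsub>G Mod range f\<^esub>"
    using N.FactGroup_pow[OF x] coset_eq_range_iff[of "f a'"] f_closed by (simp add: one_FactGroup)
  then have "n dvd m"
    using Q.pow_eq_id x n by (simp add: carrier_FactGroup rcosetsI N.subset)
  moreover have "m dvd n"
    using nm by simp
  ultimately have "n = m"
    by (rule dvd_antisym)
  then have "k = 1"
    using nm n by simp
  then show ?thesis
    using k_gcd by (simp add: coprime_iff_gcd_eq_1)
qed

lemma coset_in_generate_of_ord_eq:
  assumes x: "x \<in> carrier G" and y: "y \<in> carrier G"
    and ord_x: "Q.ord (range f #> x) = n" and ord_y: "Q.ord (range f #> y) = n" and n: "0 < n"
  shows "range f #> y \<in> generate (G Mod range f) {range f #> x}"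
proof -
  obtain a where a: "x [^] n = f a"
    using coset_pow_ord_in_range[OF x] ord_x by metis
  obtain b where b: "y [^] n = f b"
    using coset_pow_ord_in_range[OF y] ord_y by metis
  have "coprime a (int n)"
    using coset_ord_root_coprime[OF x ord_x n a] .
  then obtain u v where uv: "u * a + v * int n = 1"
    using bezout_int[of a "int n"] by (auto simp: coprime_iff_gcd_eq_1)
  define r where "r = b * u"
  define q where "q = b * v"
  have "b = b * (u * a + v * int n)"
    using uv by simp
  then have b_eq: "b = r * a + int n * q"
    unfolding r_def q_def by (simp add: algebra_simps)
  define z where "z = x [^] r \<otimes> f q"
  have z: "z \<in> carrier G"
    using x f_closed by (simp add: z_def)
  have "z [^] n = (x [^] r) [^] n \<otimes> f q [^] n"
    using x f_closed f_central by (simp add: z_def pow_mult_distrib)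
  also have "(x [^] r) [^] n = (x [^] n) [^] r"
    using x by (simp add: int_pow_int[symmetric] int_pow_pow mult.commute)
  also have "\<dots> = f (r * a)"
    using a by (simp add: f_int_pow)
  also have "f q [^] n = f (int n * q)"
    by (rule f_pow)
  finally have "z [^] n = y [^] n"
    using b b_eq by (simp add: f_add)
  then have "z = y"
    using pow_eq_pow_imp_eq z y n by blast
  then have "range f #> y = range f #> (x [^] r)"
    using coset_mult_f[of "x [^] r" q] x by (simp add: z_def)
  also have "\<dots> = (range f #> x) [^]\<^bsub>G Mod range f\<^esub> r"
    using N.FactGroup_int_pow[OF x] by simp
  finally show ?thesis
    using Q.generate_pow x by (auto simp: carrier_FactGroup rcosetsI N.subset)
qed

lemma cyclic_subgroup_eq_of_card_eq:
  assumes g: "g \<in> carrier (G Mod range f)" and h: "h \<in> carrier (G Mod range f)"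
    and card: "card (generate (G Mod range f) {g}) = card (generate (G Mod range f) {h})"
    and pos: "0 < card (generate (G Mod range f) {g})"
  shows "generate (G Mod range f) {g} = generate (G Mod range f) {h}"
proof -
  obtain x y where x: "x \<in> carrier G" "g = range f #> x" and y: "y \<in> carrier G" "h = range f #> y"
    using g h by (auto simp: carrier_FactGroup RCOSETS_def)
  have ord: "Q.ord (range f #> y) = Q.ord (range f #> x)" and ord_pos: "0 < Q.ord (range f #> x)"
    using card pos Q.generate_pow_card[OF g] Q.generate_pow_card[OF h] x y by simp_all
  have "h \<in> generate (G Mod range f) {g}"
    using coset_in_generate_of_ord_eq[OF x(1) y(1) refl ord ord_pos] x y by simp
  moreover have "g \<in> generate (G Mod range f) {h}"
    using coset_in_generate_of_ord_eq[OF y(1) x(1) refl ord[symmetric]] ord_pos ord x y by simp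
  moreover have "generate (G Mod range f) {a} \<subseteq> generate (G Mod range f) {b}"
    if "a \<in> generate (G Mod range f) {b}" "b \<in> carrier (G Mod range f)" for a b
    using that Q.generate_subgroup_incl[OF _ Q.generate_is_subgroup[of "{b}"]] by simp
  ultimately show ?thesis
    using g h by blast
qed

end

section \<open>Idempotent division semirings\<close>

lemma carrier_units_group [simp]: "carrier units_group = sr_units"
  and mult_units_group [simp]: "x \<otimes>\<^bsub>units_group\<^esub> y = x * y"
  and one_units_group [simp]: "\<one>\<^bsub>units_group\<^esub> = 1"
  by (simp_all add: units_group_def)

locale semiring_type =
  fixes T :: "('a::{plus,times,zero,one}) itself"
  assumes semiring: "is_semiring T"
begin

abbreviation U :: "'a monoid" where "U \<equiv> units_group"

lemma add_assoc: "(a + b) + c = a + (b + (c::'a))"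
  and add_comm: "a + b = b + (a::'a)"
  and zero_add: "0 + a = (a::'a)"
  and mul_assoc: "(a * b) * c = a * (b * (c::'a))"
  and one_mul: "1 * a = (a::'a)"
  and mul_one: "a * 1 = (a::'a)"
  and distl: "a * (b + c) = a * b + a * (c::'a)"
  and distr: "(a + b) * c = a * c + b * (c::'a)"
  using semiring unfolding is_semiring_def by auto

lemma units_mult_closed: "x \<in> sr_units \<Longrightarrow> y \<in> sr_units \<Longrightarrow> (x::'a) * y \<in> sr_units"
proof -
  assume "x \<in> sr_units" "y \<in> sr_units"
  then obtain x' y' where "x * x' = 1" "x' * x = 1" "y * y' = 1" "y' * y = 1"
    unfolding sr_units_def by auto
  then have "(x * y) * (y' * x') = 1" and "(y' * x') * (x * y) = 1"
    by (metis mul_assoc one_mul)+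
  then show ?thesis
    unfolding sr_units_def by blast
qed

lemma one_unit: "(1::'a) \<in> sr_units"
  unfolding sr_units_def using one_mul by blast

lemma group_units_group: "group U"
proof (rule groupI)
  show "\<exists>y\<in>carrier U. y \<otimes>\<^bsub>U\<^esub> x = \<one>\<^bsub>U\<^esub>" if "x \<in> carrier U" for x
    using that unfolding carrier_units_group sr_units_def by auto
qed (auto simp: units_mult_closed one_unit mul_assoc one_mul)

end

sublocale semiring_type \<subseteq> U: group U
  by (rule group_units_group)

locale idempotent_division_semiring = semiring_type T for T :: "('a::{plus,times,zero,one}) itself" +
  assumes nonzero_unit: "(x::'a) \<noteq> 0 \<Longrightarrow> x \<in> sr_units"
    and one_add_one: "(1::'a) + 1 = 1"
    and one_neq_zero: "(1::'a) \<noteq> 0"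
begin

lemma add_idem: "(x::'a) + x = x"
  using distl[of x 1 1] one_add_one mul_one by simp

definition sr_le :: "'a \<Rightarrow> 'a \<Rightarrow> bool" (infix "\<preceq>" 50)
  where "x \<preceq> y \<longleftrightarrow> x + y = y"

lemma sr_le_refl: "x \<preceq> x"
  by (simp add: sr_le_def add_idem)

lemma sr_le_trans [trans]: "x \<preceq> y \<Longrightarrow> y \<preceq> z \<Longrightarrow> x \<preceq> z"
  unfolding sr_le_def by (metis add_assoc)

lemma sr_le_antisym: "x \<preceq> y \<Longrightarrow> y \<preceq> x \<Longrightarrow> x = y"
  unfolding sr_le_def using add_comm[of x y] by simp

lemma sr_le_add: "x \<preceq> x + y"
  unfolding sr_le_def by (simp add: add_assoc[symmetric] add_idem)

lemma sr_le_mult_left: "x \<preceq> y \<Longrightarrow> c * x \<preceq> c * y"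
  unfolding sr_le_def by (simp add: distl[symmetric])

lemma sr_le_mult_right: "x \<preceq> y \<Longrightarrow> x * c \<preceq> y * c"
  unfolding sr_le_def by (simp add: distr[symmetric])

lemma sr_le_pow: "x \<preceq> y \<Longrightarrow> x [^]\<^bsub>U\<^esub> (k::nat) \<preceq> y [^]\<^bsub>U\<^esub> k"
proof (induction k)
  case 0
  then show ?case
    by (simp add: sr_le_refl)
next
  case (Suc k)
  have "x [^]\<^bsub>U\<^esub> k * x \<preceq> x [^]\<^bsub>U\<^esub> k * y"
    using Suc.prems by (rule sr_le_mult_left)
  also have "x [^]\<^bsub>U\<^esub> k * y \<preceq> y [^]\<^bsub>U\<^esub> k * y"
    using Suc by (intro sr_le_mult_right) simp
  finally show ?case
    by simp
qed

lemma one_add_neq_zero: "1 + (d::'a) \<noteq> 0"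
proof
  assume "1 + d = 0"
  then have "1 + 0 = (0::'a)"
    using sr_le_add[of 1 d] by (simp add: sr_le_def)
  then show False
    using one_neq_zero by (metis add_comm zero_add)
qed

lemma one_add_pow_Suc: "(1 + (d::'a)) [^]\<^bsub>U\<^esub> Suc m = (1 + d) [^]\<^bsub>U\<^esub> m + d [^]\<^bsub>U\<^esub> Suc m"
proof (induction m)
  case 0
  then show ?case
    by (simp add: one_mul)
next
  case (Suc m)
  let ?e = "1 + d"
  have step: "?e [^]\<^bsub>U\<^esub> Suc k = ?e [^]\<^bsub>U\<^esub> k + ?e [^]\<^bsub>U\<^esub> k * d" for k
    by (simp add: distl mul_one)
  have absorb: "?e [^]\<^bsub>U\<^esub> Suc m + ?e [^]\<^bsub>U\<^esub> m * d = ?e [^]\<^bsub>U\<^esub> Suc m"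
    using sr_le_add[of "?e [^]\<^bsub>U\<^esub> m * d" "?e [^]\<^bsub>U\<^esub> m"]
    unfolding step[of m] sr_le_def by (simp add: add_comm)
  have "?e [^]\<^bsub>U\<^esub> Suc (Suc m) = ?e [^]\<^bsub>U\<^esub> Suc m + ?e [^]\<^bsub>U\<^esub> Suc m * d"
    by (rule step)
  also have "\<dots> = ?e [^]\<^bsub>U\<^esub> Suc m + (?e [^]\<^bsub>U\<^esub> m * d + d [^]\<^bsub>U\<^esub> Suc (Suc m))"
    unfolding Suc by (simp add: distr)
  also have "\<dots> = ?e [^]\<^bsub>U\<^esub> Suc m + d [^]\<^bsub>U\<^esub> Suc (Suc m)"
    using absorb by (simp add: add_assoc[symmetric])
  finally show ?case .
qed

lemma one_le_one_add_pow: "1 \<preceq> (1 + d) [^]\<^bsub>U\<^esub> (m::nat)"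
proof (induction m)
  case 0
  then show ?case
    by (simp add: sr_le_refl)
next
  case (Suc m)
  then show ?case
    using sr_le_trans sr_le_add by (metis one_add_pow_Suc)
qed

lemma le_one_of_pow_le_one:
  assumes d: "d \<in> sr_units" and M: "0 < (M::nat)" and le: "d [^]\<^bsub>U\<^esub> M \<preceq> 1"
  shows "d \<preceq> 1"
proof -
  let ?e = "1 + d"
  obtain m where m: "M = Suc m"
    using M gr0_implies_Suc by blast
  have "d [^]\<^bsub>U\<^esub> M \<preceq> ?e [^]\<^bsub>U\<^esub> m"
    using le one_le_one_add_pow by (rule sr_le_trans)
  then have "?e [^]\<^bsub>U\<^esub> m * ?e = ?e [^]\<^bsub>U\<^esub> m * 1"
    using one_add_pow_Suc[of d m] m by (simp add: sr_le_def add_comm mul_one)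
  moreover have "?e \<in> sr_units"
    using nonzero_unit one_add_neq_zero by blast
  ultimately have "?e = 1"
    using U.l_cancel[of "?e [^]\<^bsub>U\<^esub> m" ?e 1] U.nat_pow_closed[of ?e m] one_unit by simp
  then show ?thesis
    by (simp add: sr_le_def add_comm)
qed

lemma comparable_one_of_pow:
  assumes u: "u \<in> sr_units" and M: "0 < (M::nat)"
    and cmp: "u [^]\<^bsub>U\<^esub> M \<preceq> 1 \<or> 1 \<preceq> u [^]\<^bsub>U\<^esub> M"
  shows "u \<preceq> 1 \<or> 1 \<preceq> u"
proof (cases "u [^]\<^bsub>U\<^esub> M \<preceq> 1")
  case True
  then show ?thesis
    using le_one_of_pow_le_one[OF u M] by blast
next
  case False
  let ?v = "inv\<^bsub>U\<^esub> u"
  have v: "?v \<in> sr_units"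
    using U.inv_closed u by simp
  have "1 \<preceq> u [^]\<^bsub>U\<^esub> M"
    using False cmp by blast
  then have "inv\<^bsub>U\<^esub> (u [^]\<^bsub>U\<^esub> M) * 1 \<preceq> inv\<^bsub>U\<^esub> (u [^]\<^bsub>U\<^esub> M) * u [^]\<^bsub>U\<^esub> M"
    by (rule sr_le_mult_left)
  moreover have "inv\<^bsub>U\<^esub> (u [^]\<^bsub>U\<^esub> M) * u [^]\<^bsub>U\<^esub> M = 1"
    using U.l_inv[of "u [^]\<^bsub>U\<^esub> M"] U.nat_pow_closed u by simp
  ultimately have "?v [^]\<^bsub>U\<^esub> M \<preceq> 1"
    using u by (simp add: U.nat_pow_inv mul_one)
  then have "?v \<preceq> 1"
    using le_one_of_pow_le_one[OF v M] by blast
  then have "u * ?v \<preceq> u * 1"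
    by (rule sr_le_mult_left)
  moreover have "u * ?v = 1"
    using U.r_inv u by simp
  ultimately show ?thesis
    by (simp add: mul_one)
qed

lemma eq_of_pow_eq_of_le:
  assumes x: "x \<in> sr_units" and y: "y \<in> sr_units" and n: "0 < (n::nat)"
    and eq: "x [^]\<^bsub>U\<^esub> n = y [^]\<^bsub>U\<^esub> n" and le: "x \<preceq> y"
  shows "x = y"
proof -
  obtain m where m: "n = Suc m"
    using n gr0_implies_Suc by blast
  have "x [^]\<^bsub>U\<^esub> m * x \<preceq> x [^]\<^bsub>U\<^esub> m * y"
    using le by (rule sr_le_mult_left)
  moreover have "x [^]\<^bsub>U\<^esub> m * y \<preceq> x [^]\<^bsub>U\<^esub> m * x"
  proof -
    have "x [^]\<^bsub>U\<^esub> m * y \<preceq> y [^]\<^bsub>U\<^esub> m * y"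
      using sr_le_pow[OF le] by (rule sr_le_mult_right)
    then show ?thesis
      using eq m by simp
  qed
  ultimately have "x [^]\<^bsub>U\<^esub> m * x = x [^]\<^bsub>U\<^esub> m * y"
    by (rule sr_le_antisym)
  then show ?thesis
    using U.l_cancel[of "x [^]\<^bsub>U\<^esub> m" x y] U.nat_pow_closed[of x m] x y by simp
qed

lemma unique_roots_group_units:
  assumes total: "\<And>u. u \<in> sr_units \<Longrightarrow> u \<preceq> 1 \<or> 1 \<preceq> u"
  shows "unique_roots_group U"
proof (unfold_locales)
  fix x y and n :: nat
  assume x: "x \<in> carrier U" and y: "y \<in> carrier U" and n: "0 < n"
    and eq: "x [^]\<^bsub>U\<^esub> n = y [^]\<^bsub>U\<^esub> n"
  let ?u = "x * inv\<^bsub>U\<^esub> y"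
  from x y have x: "x \<in> sr_units" and y: "y \<in> sr_units"
    by simp_all
  have "inv\<^bsub>U\<^esub> y * y = 1"
    using U.l_inv y by simp
  then have xy: "?u * y = x"
    by (simp add: mul_assoc mul_one)
  have "?u \<in> sr_units"
    using units_mult_closed U.inv_closed y x by simp
  then have "?u \<preceq> 1 \<or> 1 \<preceq> ?u"
    by (rule total)
  then have "?u * y \<preceq> 1 * y \<or> 1 * y \<preceq> ?u * y"
    using sr_le_mult_right by blast
  then have "x \<preceq> y \<or> y \<preceq> x"
    unfolding xy one_mul .
  then show "x = y"
    using eq_of_pow_eq_of_le[OF x y n eq] eq_of_pow_eq_of_le[OF y x n eq[symmetric]] by blast
qed

end

section \<open>Division semialgebras over Z_max\<close>

locale zmax_division_semialgebra =
  fixes phi :: "zmax \<Rightarrow> 'a::{plus,times,zero,one}"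
  assumes division_semialgebra: "is_division_semialgebra_zmax phi"
begin

lemma phi_Some_mult: "phi (Some a) * phi (Some b) = phi (Some (a + b))"
  using division_semialgebra unfolding is_division_semialgebra_zmax_def
  by (metis zmax_mul.simps(1))

lemma phi_Some_add: "phi (Some a) + phi (Some b) = phi (Some (max a b))"
  using division_semialgebra unfolding is_division_semialgebra_zmax_def
  by (metis zmax_add.simps(3))

lemma phi_Some_0: "phi (Some 0) = 1"
  and phi_None: "phi None = 0"
  and phi_Some_central: "phi (Some k) * x = x * phi (Some k)"
  and inj_phi: "inj phi"
  using division_semialgebra
  unfolding is_division_semialgebra_zmax_def zmax_one_def zmax_zero_def by auto

sublocale idempotent_division_semiring "TYPE('a)"
proof unfold_locales
  show "is_semiring TYPE('a)" and "\<And>x::'a. x \<noteq> 0 \<Longrightarrow> x \<in> sr_units"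
    using division_semialgebra
    unfolding is_division_semialgebra_zmax_def is_division_semiring_def by auto
  show "(1::'a) + 1 = 1"
    using phi_Some_add[of 0 0] phi_Some_0 by simp
  show "(1::'a) \<noteq> 0"
    using inj_phi phi_Some_0 phi_None by (metis injD option.distinct(1))
qed

lemma phi_Some_le_iff: "phi (Some a) \<preceq> phi (Some b) \<longleftrightarrow> a \<le> b"
  using inj_phi by (auto simp: sr_le_def phi_Some_add dest: injD)

lemma hom_phi_Some: "(\<lambda>k. phi (Some k)) \<in> hom integer_group U"
proof (rule homI)
  show "phi (Some k) \<in> carrier U" for k
    unfolding carrier_units_group sr_units_def
    using phi_Some_mult[of k "-k"] phi_Some_mult[of "-k" k] phi_Some_0 by auto
qed (simp add: phi_Some_mult)

end

sublocale zmax_division_semialgebra \<subseteq> central_int_subgroup U "\<lambda>k. phi (Some k)"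
  using hom_phi_Some phi_Some_central by unfold_locales simp_all

context zmax_division_semialgebra
begin

lemma unit_quotient_eq: "unit_quotient phi = U Mod range (\<lambda>k. phi (Some k))"
  by (simp add: unit_quotient_def scalar_units_def image_image)

lemma unit_comparable_one:
  assumes fin: "finite (carrier (unit_quotient phi))" and u: "u \<in> sr_units"
  shows "u \<preceq> 1 \<or> 1 \<preceq> u"
proof -
  let ?M = "Q.ord (range (\<lambda>k. phi (Some k)) #>\<^bsub>U\<^esub> u)"
  have "range (\<lambda>k. phi (Some k)) #>\<^bsub>U\<^esub> u \<in> carrier (U Mod range (\<lambda>k. phi (Some k)))"
    using u by (simp add: carrier_FactGroup U.rcosetsI N.subset)
  then have M: "0 < ?M"
    using Q.ord_ge_1 fin unfolding unit_quotient_eq by fastforce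
  obtain a where "u [^]\<^bsub>U\<^esub> ?M = phi (Some a)"
    using coset_pow_ord_in_range[of u] u by auto
  moreover have "phi (Some a) \<preceq> phi (Some 0) \<or> phi (Some 0) \<preceq> phi (Some a)"
    unfolding phi_Some_le_iff by linarith
  ultimately have "u [^]\<^bsub>U\<^esub> ?M \<preceq> 1 \<or> 1 \<preceq> u [^]\<^bsub>U\<^esub> ?M"
    by (simp add: phi_Some_0)
  then show ?thesis
    using comparable_one_of_pow[OF u M] by blast
qed

lemma central_int_quotient_of_finite:
  assumes "finite (carrier (unit_quotient phi))"
  shows "central_int_quotient U (\<lambda>k. phi (Some k))"
  by (intro central_int_quotient.intro central_int_subgroup_axioms unique_roots_group_units
      unit_comparable_one[OF assms])

end

theorem mainTheorem16:
  fixes phi :: "zmax \<Rightarrow> 'a::{plus,times,zero,one}"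
    and n :: nat
  assumes "is_division_semialgebra_zmax phi"
    and "finite (carrier (unit_quotient phi))"
    and "0 < n"
  shows "\<forall>H1 H2. subgroup H1 (unit_quotient phi) \<and> subgroup H2 (unit_quotient phi)
      \<and> (\<exists>g\<in>carrier (unit_quotient phi). H1 = generate (unit_quotient phi) {g})
      \<and> (\<exists>g\<in>carrier (unit_quotient phi). H2 = generate (unit_quotient phi) {g})
      \<and> card H1 = n \<and> card H2 = n \<longrightarrow> H1 = H2"
proof (intro allI impI)
  interpret zmax_division_semialgebra phi
    by (rule zmax_division_semialgebra.intro) (rule assms(1))
  interpret central_int_quotient U "\<lambda>k. phi (Some k)"
    using central_int_quotient_of_finite[OF assms(2)] .
  fix H1 H2
  assume "subgroup H1 (unit_quotient phi) \<and> subgroup H2 (unit_quotient phi)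
      \<and> (\<exists>g\<in>carrier (unit_quotient phi). H1 = generate (unit_quotient phi) {g})
      \<and> (\<exists>g\<in>carrier (unit_quotient phi). H2 = generate (unit_quotient phi) {g})
      \<and> card H1 = n \<and> card H2 = n"
  then obtain g h where "g \<in> carrier (unit_quotient phi)" "H1 = generate (unit_quotient phi) {g}"
    and "h \<in> carrier (unit_quotient phi)" "H2 = generate (unit_quotient phi) {h}"
    and "card H1 = n" "card H2 = n"
    by blast
  then show "H1 = H2"
    using cyclic_subgroup_eq_of_card_eq assms(3) unfolding unit_quotient_eq by simp
qed

end
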